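(* Let $b_1,b_2,b_3\in\mathbb{R}$ with $b_1b_2b_3\neq 0$, and define $$\bar P^b(x)=\begin{pmatrix}0&\frac{b_1b_2}{b_3}x_3&b_1x_2\\ -\frac{b_1b_2}{b_3}x_3&0&0\\ -b_1x_2&0&0\end{pmatrix},\qquad \bar H^b(x)=-\frac{b_3}{2b_1}x_1^2+x_3,\qquad \bar C^b(x)=\frac{b_1}{2}\Big(x_2^2-\frac{b_2}{b_3}x_3^2\Big).$$ Then: (i) $(\mathbb{R}^3,\bar P^b,\bar H^b)$ is a Hamilton-Poisson realization of the system $$\dot x_1=b_1x_2,\qquad \dot x_2=b_2x_1x_3,\qquad \dot x_3=b_3x_1x_2,$$ that is, $\bar P^b$ defines a Poisson bracket $\{f,g\}_1=(\nabla f)^T\bar P^b\nabla g$ on $\mathbb{R}^3$ and the system reads $\dot x=\bar P^b(x)\nabla\bar H^b(x)$; (ii) $\bar C^b$ is a Casimir of $(\mathbb{R}^3,\{\cdot,\cdot\}_1)$, i.e. $\{\bar C^b,f\}_1=0$ for all $f\in C^\infty(\mathbb{R}^3,\mathbb{R})$. *)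

theory Defs
  imports "HOL-Analysis.Analysis"
begin

definition pd :: "3 \<Rightarrow> (real^3 \<Rightarrow> real) \<Rightarrow> real^3 \<Rightarrow> real" where
  "pd i f x = frechet_derivative f (at x) (axis i 1)"

definition iter_pd :: "3 list \<Rightarrow> (real^3 \<Rightarrow> real) \<Rightarrow> real^3 \<Rightarrow> real" where
  "iter_pd is f = foldr pd is f"

definition smooth3 :: "(real^3 \<Rightarrow> real) \<Rightarrow> bool" where
  "smooth3 f \<longleftrightarrow> (\<forall>is x. iter_pd is f differentiable (at x))"

definition grad3 :: "(real^3 \<Rightarrow> real) \<Rightarrow> real^3 \<Rightarrow> real^3" where
  "grad3 f x = (\<chi> i. pd i f x)"

definition pbracket :: "(real^3 \<Rightarrow> real^3^3) \<Rightarrow> (real^3 \<Rightarrow> real) \<Rightarrow> (real^3 \<Rightarrow> real) \<Rightarrow> real^3 \<Rightarrow> real" where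
  "pbracket P f g x = grad3 f x \<bullet> (P x *v grad3 g x)"

definition poisson_structure :: "(real^3 \<Rightarrow> real^3^3) \<Rightarrow> bool" where
  "poisson_structure P \<longleftrightarrow>
     (\<forall>f g. smooth3 f \<and> smooth3 g \<longrightarrow> smooth3 (pbracket P f g)) \<and>
     (\<forall>f g h a c. smooth3 f \<and> smooth3 g \<and> smooth3 h \<longrightarrow>
        pbracket P (\<lambda>x. a * f x + c * g x) h = (\<lambda>x. a * pbracket P f h x + c * pbracket P g h x)) \<and>
     (\<forall>f g. smooth3 f \<and> smooth3 g \<longrightarrow> pbracket P f g = (\<lambda>x. - pbracket P g f x)) \<and>
     (\<forall>f g h. smooth3 f \<and> smooth3 g \<and> smooth3 h \<longrightarrow>
        (\<forall>x. pbracket P f (pbracket P g h) x + pbracket P g (pbracket P h f) x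
             + pbracket P h (pbracket P f g) x = 0)) \<and>
     (\<forall>f g h. smooth3 f \<and> smooth3 g \<and> smooth3 h \<longrightarrow>
        pbracket P f (\<lambda>x. g x * h x) = (\<lambda>x. pbracket P f g x * h x + g x * pbracket P f h x))"

definition hamilton_poisson_realization ::
  "(real^3 \<Rightarrow> real^3^3) \<Rightarrow> (real^3 \<Rightarrow> real) \<Rightarrow> (real^3 \<Rightarrow> real^3) \<Rightarrow> bool" where
  "hamilton_poisson_realization P H F \<longleftrightarrow>
     poisson_structure P \<and> smooth3 H \<and> (\<forall>x. F x = P x *v grad3 H x)"

definition casimir :: "(real^3 \<Rightarrow> real^3^3) \<Rightarrow> (real^3 \<Rightarrow> real) \<Rightarrow> bool" where
  "casimir P C \<longleftrightarrow> smooth3 C \<and> (\<forall>f. smooth3 f \<longrightarrow> (\<forall>x. pbracket P C f x = 0))"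

definition Pb :: "real \<Rightarrow> real \<Rightarrow> real \<Rightarrow> real^3 \<Rightarrow> real^3^3" where
  "Pb b1 b2 b3 x = vector [
      vector [0, b1 * b2 / b3 * x$3, b1 * x$2],
      vector [- (b1 * b2 / b3 * x$3), 0, 0],
      vector [- (b1 * x$2), 0, 0]]"

definition Hb :: "real \<Rightarrow> real \<Rightarrow> real \<Rightarrow> real^3 \<Rightarrow> real" where
  "Hb b1 b2 b3 x = - (b3 / (2 * b1)) * (x$1)^2 + x$3"

definition Cb :: "real \<Rightarrow> real \<Rightarrow> real \<Rightarrow> real^3 \<Rightarrow> real" where
  "Cb b1 b2 b3 x = b1 / 2 * ((x$2)^2 - b2 / b3 * (x$3)^2)"

definition Fb :: "real \<Rightarrow> real \<Rightarrow> real \<Rightarrow> real^3 \<Rightarrow> real^3" where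
  "Fb b1 b2 b3 x = vector [b1 * x$2, b2 * x$1 * x$3, b3 * x$1 * x$2]"

end

theory Submission imports Defs begin

text \<open>The bracket of Pb only involves first partial derivatives, with coefficients that are
linear in x. Hence bilinearity, skew-symmetry and the Leibniz rule hold pointwise, while the
Jacobi identity becomes a polynomial identity in first and second partial derivatives as soon as
mixed second partials commute, which is Schwarz's theorem for smooth functions. Hb and Cb are
quadratic polynomials, so the Hamiltonian form of the system and the Casimir property are direct
computations.\<close>

lemma pd_has_derivative: "(f has_derivative f') (at x) \<Longrightarrow> pd i f x = f' (axis i 1)"
  unfolding pd_def using frechet_derivative_at by metis

lemma pd_add [simp]:
  assumes "f differentiable at x" "g differentiable at x"
  shows "pd i (\<lambda>x. f x + g x) x = pd i f x + pd i g x"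
  using pd_has_derivative[OF has_derivative_add[OF assms[unfolded frechet_derivative_works]]]
  by (simp add: pd_def)

lemma pd_diff [simp]:
  assumes "f differentiable at x" "g differentiable at x"
  shows "pd i (\<lambda>x. f x - g x) x = pd i f x - pd i g x"
  using pd_has_derivative[OF has_derivative_diff[OF assms[unfolded frechet_derivative_works]]]
  by (simp add: pd_def)

lemma pd_mult [simp]:
  assumes "f differentiable at x" "g differentiable at x"
  shows "pd i (\<lambda>x. f x * g x) x = f x * pd i g x + pd i f x * g x"
  using pd_has_derivative[OF has_derivative_mult[OF assms[unfolded frechet_derivative_works]]]
  by (simp add: pd_def)

lemma pd_const [simp]: "pd i (\<lambda>x. c) x = 0"
  by (rule pd_has_derivative) (auto intro!: derivative_eq_intros)

lemma pd_component [simp]: "pd i (\<lambda>x. x $ k) x = (if k = i then 1 else 0)"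
  using pd_has_derivative[OF bounded_linear_imp_has_derivative[OF bounded_linear_vec_nth[of k]]]
  by (simp add: axis_def)

lemma differentiable_component [simp]: "(\<lambda>x::real^3. x $ k) differentiable at x"
  using bounded_linear_imp_differentiable[OF bounded_linear_vec_nth] by blast

lemma has_real_derivative_along_axis:
  fixes f :: "real^3 \<Rightarrow> real"
  assumes "f differentiable at (y + s *\<^sub>R axis i 1)"
  shows "((\<lambda>s. f (y + s *\<^sub>R axis i 1)) has_real_derivative pd i f (y + s *\<^sub>R axis i 1)) (at s)"
proof -
  let ?F = "frechet_derivative f (at (y + s *\<^sub>R axis i 1))"
  have F: "(f has_derivative ?F) (at (y + s *\<^sub>R axis i 1))"
    using assms frechet_derivative_works by blast
  have line: "((\<lambda>s. y + s *\<^sub>R axis i (1::real)) has_derivative (\<lambda>h. h *\<^sub>R axis i 1)) (at s)"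
    by (auto intro!: derivative_eq_intros)
  have "((\<lambda>s. f (y + s *\<^sub>R axis i 1)) has_derivative (\<lambda>h. ?F (h *\<^sub>R axis i 1))) (at s)"
    using has_derivative_compose[OF line F] by (simp add: o_def)
  moreover have "(\<lambda>h. ?F (h *\<^sub>R axis i 1)) = (*) (pd i f (y + s *\<^sub>R axis i 1))"
    using linear_scale[OF has_derivative_linear[OF F]] by (auto simp: pd_def fun_eq_iff)
  ultimately show ?thesis by (simp add: has_field_derivative_def)
qed

definition differentiable_upto :: "nat \<Rightarrow> (real^3 \<Rightarrow> real) \<Rightarrow> bool" where
  "differentiable_upto n f \<longleftrightarrow> (\<forall>is. length is \<le> n \<longrightarrow> (\<forall>x. iter_pd is f differentiable at x))"

lemma differentiable_upto_0: "differentiable_upto 0 f \<longleftrightarrow> (\<forall>x. f differentiable at x)"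
  by (simp add: differentiable_upto_def iter_pd_def)

lemma differentiable_upto_Suc:
  "differentiable_upto (Suc n) f \<longleftrightarrow>
     (\<forall>x. f differentiable at x) \<and> (\<forall>i. differentiable_upto n (pd i f))"
proof -
  have snoc: "(\<forall>is. length is \<le> Suc n \<longrightarrow> P is) \<longleftrightarrow> P [] \<and> (\<forall>i is. length is \<le> n \<longrightarrow> P (is @ [i]))"
    for P :: "3 list \<Rightarrow> bool"
  proof (intro iffI allI impI)
    fix "is" :: "3 list"
    assume "P [] \<and> (\<forall>i is. length is \<le> n \<longrightarrow> P (is @ [i]))" "length is \<le> Suc n"
    then show "P is" by (cases "is" rule: rev_cases) auto
  qed auto
  show ?thesis
    unfolding differentiable_upto_def snoc by (auto simp: iter_pd_def)
qed

lemma smooth3_iff_differentiable_upto: "smooth3 f \<longleftrightarrow> (\<forall>n. differentiable_upto n f)"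
  unfolding smooth3_def differentiable_upto_def by (meson order_refl)

lemma smooth3_imp_differentiable: "smooth3 f \<Longrightarrow> f differentiable at x"
  using differentiable_upto_0 smooth3_iff_differentiable_upto by blast

lemma smooth3_pd: "smooth3 f \<Longrightarrow> smooth3 (pd i f)"
  by (metis smooth3_iff_differentiable_upto differentiable_upto_Suc)

lemma differentiable_pd [simp]: "smooth3 f \<Longrightarrow> pd i f differentiable at x"
  by (simp add: smooth3_imp_differentiable smooth3_pd)

lemma differentiable_upto_add:
  "differentiable_upto n f \<Longrightarrow> differentiable_upto n g \<Longrightarrow> differentiable_upto n (\<lambda>x. f x + g x)"
proof (induction n arbitrary: f g)
  case 0 then show ?case by (simp add: differentiable_upto_0)
next
  case (Suc n)
  have "pd i (\<lambda>x. f x + g x) = (\<lambda>x. pd i f x + pd i g x)" for i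
    using Suc.prems by (auto simp: differentiable_upto_Suc)
  with Suc show ?case by (auto simp: differentiable_upto_Suc)
qed

lemma differentiable_upto_mult:
  "differentiable_upto n f \<Longrightarrow> differentiable_upto n g \<Longrightarrow> differentiable_upto n (\<lambda>x. f x * g x)"
proof (induction n arbitrary: f g)
  case 0 then show ?case by (simp add: differentiable_upto_0)
next
  case (Suc n)
  have "pd i (\<lambda>x. f x * g x) = (\<lambda>x. f x * pd i g x + pd i f x * g x)" for i
    using Suc.prems by (auto simp: differentiable_upto_Suc)
  moreover have "differentiable_upto n f" "differentiable_upto n g"
    using Suc.prems by (auto simp: differentiable_upto_def)
  ultimately show ?case
    using Suc by (auto simp: differentiable_upto_Suc intro!: differentiable_upto_add)
qed

lemma differentiable_upto_const: "differentiable_upto n (\<lambda>x. c)"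
proof (induction n arbitrary: c)
  case 0 then show ?case by (simp add: differentiable_upto_0)
next
  case (Suc n)
  have "pd i (\<lambda>x. c) = (\<lambda>x. 0)" for i by (simp add: fun_eq_iff)
  with Suc show ?case by (simp add: differentiable_upto_Suc)
qed

lemma differentiable_upto_component: "differentiable_upto n (\<lambda>x. x $ k)"
proof (cases n)
  case 0 then show ?thesis by (simp add: differentiable_upto_0)
next
  case (Suc m)
  have "pd i (\<lambda>x. x $ k) = (\<lambda>x. if k = i then 1 else 0)" for i by (simp add: fun_eq_iff)
  with Suc show ?thesis by (simp add: differentiable_upto_Suc differentiable_upto_const)
qed

lemma smooth3_add: "smooth3 f \<Longrightarrow> smooth3 g \<Longrightarrow> smooth3 (\<lambda>x. f x + g x)"
  by (simp add: smooth3_iff_differentiable_upto differentiable_upto_add)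

lemma smooth3_mult: "smooth3 f \<Longrightarrow> smooth3 g \<Longrightarrow> smooth3 (\<lambda>x. f x * g x)"
  by (simp add: smooth3_iff_differentiable_upto differentiable_upto_mult)

lemma smooth3_const: "smooth3 (\<lambda>x. c)"
  by (simp add: smooth3_iff_differentiable_upto differentiable_upto_const)

lemma smooth3_component: "smooth3 (\<lambda>x. x $ k)"
  by (simp add: smooth3_iff_differentiable_upto differentiable_upto_component)

lemma smooth3_diff:
  assumes "smooth3 f" "smooth3 g"
  shows "smooth3 (\<lambda>x. f x - g x)"
proof -
  have "smooth3 (\<lambda>x. f x + (- 1) * g x)" using assms by (intro smooth3_add smooth3_mult smooth3_const)
  then show ?thesis by simp
qed

section \<open>Symmetry of second partial derivatives\<close>

lemma second_difference_mvt:
  fixes f :: "real^3 \<Rightarrow> real"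
  assumes f: "smooth3 f" and t: "t > 0"
  obtains \<sigma> \<tau> where "0 < \<sigma>" "\<sigma> < t" "0 < \<tau>" "\<tau> < t"
    "f (x + t *\<^sub>R axis i 1 + t *\<^sub>R axis j 1) - f (x + t *\<^sub>R axis i 1) - f (x + t *\<^sub>R axis j 1) + f x
     = t\<^sup>2 * pd j (pd i f) (x + \<sigma> *\<^sub>R axis i 1 + \<tau> *\<^sub>R axis j 1)"
proof -
  have d: "\<And>z. f differentiable at z" using smooth3_imp_differentiable f by blast
  have "\<exists>\<sigma>>0. \<sigma> < t \<and> (\<lambda>s. f (x + t *\<^sub>R axis j 1 + s *\<^sub>R axis i 1) - f (x + s *\<^sub>R axis i 1)) t
      - (\<lambda>s. f (x + t *\<^sub>R axis j 1 + s *\<^sub>R axis i 1) - f (x + s *\<^sub>R axis i 1)) 0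
     = (t - 0) * (pd i f (x + t *\<^sub>R axis j 1 + \<sigma> *\<^sub>R axis i 1) - pd i f (x + \<sigma> *\<^sub>R axis i 1))"
    by (rule MVT2[OF t]) (intro DERIV_diff has_real_derivative_along_axis d)
  then obtain \<sigma> where \<sigma>: "0 < \<sigma>" "\<sigma> < t" and outer:
    "f (x + t *\<^sub>R axis j 1 + t *\<^sub>R axis i 1) - f (x + t *\<^sub>R axis i 1) - (f (x + t *\<^sub>R axis j 1) - f x)
     = t * (pd i f (x + t *\<^sub>R axis j 1 + \<sigma> *\<^sub>R axis i 1) - pd i f (x + \<sigma> *\<^sub>R axis i 1))"
    by auto
  have "\<exists>\<tau>>0. \<tau> < t \<and> (\<lambda>s. pd i f (x + \<sigma> *\<^sub>R axis i 1 + s *\<^sub>R axis j 1)) t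
      - (\<lambda>s. pd i f (x + \<sigma> *\<^sub>R axis i 1 + s *\<^sub>R axis j 1)) 0
     = (t - 0) * pd j (pd i f) (x + \<sigma> *\<^sub>R axis i 1 + \<tau> *\<^sub>R axis j 1)"
    using f by (intro MVT2[OF t] has_real_derivative_along_axis differentiable_pd)
  then obtain \<tau> where \<tau>: "0 < \<tau>" "\<tau> < t" and inner:
    "pd i f (x + \<sigma> *\<^sub>R axis i 1 + t *\<^sub>R axis j 1) - pd i f (x + \<sigma> *\<^sub>R axis i 1)
     = t * pd j (pd i f) (x + \<sigma> *\<^sub>R axis i 1 + \<tau> *\<^sub>R axis j 1)"
    by auto
  show thesis
    using that[OF \<sigma> \<tau>] outer inner by (simp add: add_ac power2_eq_square algebra_simps)
qed

lemma continuous_at_small_box: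
  fixes g :: "real^3 \<Rightarrow> real"
  assumes "continuous (at x) g" "e > 0"
  obtains t where "t > 0" "\<And>\<sigma> \<tau>. 0 < \<sigma> \<Longrightarrow> \<sigma> < t \<Longrightarrow> 0 < \<tau> \<Longrightarrow> \<tau> < t \<Longrightarrow>
     \<bar>g (x + \<sigma> *\<^sub>R axis i 1 + \<tau> *\<^sub>R axis j 1) - g x\<bar> < e"
proof -
  obtain d where "d > 0" and d: "\<And>y. dist y x < d \<Longrightarrow> dist (g y) (g x) < e"
    using assms unfolding continuous_at_eps_delta by blast
  have "\<bar>g (x + \<sigma> *\<^sub>R axis i 1 + \<tau> *\<^sub>R axis j 1) - g x\<bar> < e"
    if "0 < \<sigma>" "\<sigma> < d / 2" "0 < \<tau>" "\<tau> < d / 2" for \<sigma> \<tau>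
  proof -
    have "dist (x + \<sigma> *\<^sub>R axis i 1 + \<tau> *\<^sub>R axis j 1) x \<le> \<sigma> + \<tau>"
      using norm_triangle_ineq[of "\<sigma> *\<^sub>R axis i (1::real)" "\<tau> *\<^sub>R axis j 1"] that
      by (simp add: dist_norm)
    then show ?thesis using d that by (simp add: dist_real_def)
  qed
  with \<open>d > 0\<close> show thesis by (intro that[of "d / 2"]) auto
qed

lemma mixed_partials_agree_nearby:
  fixes f :: "real^3 \<Rightarrow> real"
  assumes f: "smooth3 f" and "t > 0"
  obtains \<sigma> \<tau> \<sigma>' \<tau>' where "0 < \<sigma>" "\<sigma> < t" "0 < \<tau>" "\<tau> < t" "0 < \<sigma>'" "\<sigma>' < t" "0 < \<tau>'" "\<tau>' < t"
    "pd j (pd i f) (x + \<sigma> *\<^sub>R axis i 1 + \<tau> *\<^sub>R axis j 1)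
     = pd i (pd j f) (x + \<sigma>' *\<^sub>R axis j 1 + \<tau>' *\<^sub>R axis i 1)"
proof -
  obtain \<sigma> \<tau> where \<sigma>\<tau>: "0 < \<sigma>" "\<sigma> < t" "0 < \<tau>" "\<tau> < t" and ij:
    "f (x + t *\<^sub>R axis i 1 + t *\<^sub>R axis j 1) - f (x + t *\<^sub>R axis i 1) - f (x + t *\<^sub>R axis j 1) + f x
     = t\<^sup>2 * pd j (pd i f) (x + \<sigma> *\<^sub>R axis i 1 + \<tau> *\<^sub>R axis j 1)"
    using second_difference_mvt[OF assms] by blast
  obtain \<sigma>' \<tau>' where \<sigma>'\<tau>': "0 < \<sigma>'" "\<sigma>' < t" "0 < \<tau>'" "\<tau>' < t" and ji:
    "f (x + t *\<^sub>R axis j 1 + t *\<^sub>R axis i 1) - f (x + t *\<^sub>R axis j 1) - f (x + t *\<^sub>R axis i 1) + f x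
     = t\<^sup>2 * pd i (pd j f) (x + \<sigma>' *\<^sub>R axis j 1 + \<tau>' *\<^sub>R axis i 1)"
    using second_difference_mvt[OF assms] by blast
  have "f (x + t *\<^sub>R axis i 1 + t *\<^sub>R axis j 1) = f (x + t *\<^sub>R axis j 1 + t *\<^sub>R axis i 1)"
    by (simp add: add_ac)
  with ij ji have "t\<^sup>2 * pd j (pd i f) (x + \<sigma> *\<^sub>R axis i 1 + \<tau> *\<^sub>R axis j 1)
      = t\<^sup>2 * pd i (pd j f) (x + \<sigma>' *\<^sub>R axis j 1 + \<tau>' *\<^sub>R axis i 1)"
    by linarith
  with \<open>t > 0\<close> show thesis by (intro that[OF \<sigma>\<tau> \<sigma>'\<tau>']) simp
qed

lemma pd_commute:
  assumes f: "smooth3 f"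
  shows "pd j (pd i f) x = pd i (pd j f) x"
proof (rule ccontr)
  assume "pd j (pd i f) x \<noteq> pd i (pd j f) x"
  define e where "e = \<bar>pd j (pd i f) x - pd i (pd j f) x\<bar> / 2"
  then have "e > 0" using \<open>pd j (pd i f) x \<noteq> _\<close> by simp
  have cont: "continuous (at x) (pd k (pd l f))" for k l
    using f differentiable_imp_continuous_within differentiable_pd smooth3_pd by blast
  obtain t1 where "t1 > 0" and t1: "\<And>\<sigma> \<tau>. 0 < \<sigma> \<Longrightarrow> \<sigma> < t1 \<Longrightarrow> 0 < \<tau> \<Longrightarrow> \<tau> < t1 \<Longrightarrow>
      \<bar>pd j (pd i f) (x + \<sigma> *\<^sub>R axis i 1 + \<tau> *\<^sub>R axis j 1) - pd j (pd i f) x\<bar> < e"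
    using continuous_at_small_box[OF cont \<open>e > 0\<close>] by blast
  obtain t2 where "t2 > 0" and t2: "\<And>\<sigma> \<tau>. 0 < \<sigma> \<Longrightarrow> \<sigma> < t2 \<Longrightarrow> 0 < \<tau> \<Longrightarrow> \<tau> < t2 \<Longrightarrow>
      \<bar>pd i (pd j f) (x + \<sigma> *\<^sub>R axis j 1 + \<tau> *\<^sub>R axis i 1) - pd i (pd j f) x\<bar> < e"
    using continuous_at_small_box[OF cont \<open>e > 0\<close>] by blast
  have "min t1 t2 > 0" using \<open>t1 > 0\<close> \<open>t2 > 0\<close> by simp
  then obtain \<sigma> \<tau> \<sigma>' \<tau>' where "0 < \<sigma>" "\<sigma> < t1" "0 < \<tau>" "\<tau> < t1" "0 < \<sigma>'" "\<sigma>' < t2" "0 < \<tau>'" "\<tau>' < t2"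
    "pd j (pd i f) (x + \<sigma> *\<^sub>R axis i 1 + \<tau> *\<^sub>R axis j 1)
     = pd i (pd j f) (x + \<sigma>' *\<^sub>R axis j 1 + \<tau>' *\<^sub>R axis i 1)"
    using mixed_partials_agree_nearby[OF f] by (metis min_less_iff_conj)
  with t1[of \<sigma> \<tau>] t2[of \<sigma>' \<tau>'] show False
    by (simp add: e_def abs_real_def split: if_splits)
qed

section \<open>The Poisson structure Pb\<close>

text \<open>Here and for Hb and Cb, quotients of the parameters are passed in as atoms: otherwise the
simplifier normalises them before it has computed the partial derivatives.\<close>

lemma pbracket_Pb:
  assumes "a = b1 * b2 / b3"
  shows "pbracket (Pb b1 b2 b3) f g = (\<lambda>x. a * x$3 * (pd 1 f x * pd 2 g x - pd 2 f x * pd 1 g x)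
      + b1 * x$2 * (pd 1 f x * pd 3 g x - pd 3 f x * pd 1 g x))"
  using assms
  by (simp add: fun_eq_iff pbracket_def Pb_def grad3_def inner_vec_def matrix_vector_mult_def
      sum_3 algebra_simps)

lemma smooth3_pbracket_Pb: "smooth3 f \<Longrightarrow> smooth3 g \<Longrightarrow> smooth3 (pbracket (Pb b1 b2 b3) f g)"
  unfolding pbracket_Pb[OF refl] by (intro smooth3_add smooth3_diff smooth3_mult smooth3_const smooth3_component smooth3_pd)

lemma jacobi_Pb:
  assumes f: "smooth3 f" and g: "smooth3 g" and h: "smooth3 h"
  shows "pbracket (Pb b1 b2 b3) f (pbracket (Pb b1 b2 b3) g h) x
       + pbracket (Pb b1 b2 b3) g (pbracket (Pb b1 b2 b3) h f) x
       + pbracket (Pb b1 b2 b3) h (pbracket (Pb b1 b2 b3) f g) x = 0"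
proof -
  obtain a where a: "a = b1 * b2 / b3" by blast
  show ?thesis
    using assms pd_commute[OF f, of 2 1] pd_commute[OF f, of 3 1] pd_commute[OF f, of 3 2]
      pd_commute[OF g, of 2 1] pd_commute[OF g, of 3 1] pd_commute[OF g, of 3 2]
      pd_commute[OF h, of 2 1] pd_commute[OF h, of 3 1] pd_commute[OF h, of 3 2]
    by (simp add: pbracket_Pb[OF a]) (simp add: algebra_simps)
qed

lemma poisson_structure_Pb: "poisson_structure (Pb b1 b2 b3)"
  unfolding poisson_structure_def
proof (intro conjI allI impI)
  obtain a where a: "a = b1 * b2 / b3" by blast
  fix f g h :: "real^3 \<Rightarrow> real" and c d :: real
  show "smooth3 (pbracket (Pb b1 b2 b3) f g)" if "smooth3 f \<and> smooth3 g"
    using that smooth3_pbracket_Pb by blast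
  show "pbracket (Pb b1 b2 b3) (\<lambda>x. c * f x + d * g x) h
      = (\<lambda>x. c * pbracket (Pb b1 b2 b3) f h x + d * pbracket (Pb b1 b2 b3) g h x)"
    if "smooth3 f \<and> smooth3 g \<and> smooth3 h"
    using that by (simp add: pbracket_Pb[OF a] fun_eq_iff smooth3_imp_differentiable algebra_simps)
  show "pbracket (Pb b1 b2 b3) f g = (\<lambda>x. - pbracket (Pb b1 b2 b3) g f x)"
    by (simp add: pbracket_Pb[OF a] algebra_simps)
  show "pbracket (Pb b1 b2 b3) f (pbracket (Pb b1 b2 b3) g h) x
      + pbracket (Pb b1 b2 b3) g (pbracket (Pb b1 b2 b3) h f) x
      + pbracket (Pb b1 b2 b3) h (pbracket (Pb b1 b2 b3) f g) x = 0"
    if "smooth3 f \<and> smooth3 g \<and> smooth3 h" for x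
    using that jacobi_Pb by blast
  show "pbracket (Pb b1 b2 b3) f (\<lambda>x. g x * h x)
      = (\<lambda>x. pbracket (Pb b1 b2 b3) f g x * h x + g x * pbracket (Pb b1 b2 b3) f h x)"
    if "smooth3 f \<and> smooth3 g \<and> smooth3 h"
    using that by (simp add: pbracket_Pb[OF a] fun_eq_iff smooth3_imp_differentiable algebra_simps)
qed

lemma Hb_eq:
  assumes "c = - (b3 / (2 * b1))"
  shows "Hb b1 b2 b3 = (\<lambda>x. c * (x$1 * x$1) + x$3)"
  using assms by (simp add: fun_eq_iff Hb_def power2_eq_square)

lemma smooth3_Hb: "smooth3 (Hb b1 b2 b3)"
  unfolding Hb_eq[OF refl] by (intro smooth3_add smooth3_mult smooth3_const smooth3_component)

lemma Fb_eq_Pb_grad3_Hb: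
  assumes "b1 \<noteq> 0" "b3 \<noteq> 0"
  shows "Fb b1 b2 b3 x = Pb b1 b2 b3 x *v grad3 (Hb b1 b2 b3) x"
proof -
  obtain c where c: "c = - (b3 / (2 * b1))" by blast
  have "grad3 (Hb b1 b2 b3) x = vector [2 * c * x$1, 0, 1]"
    unfolding Hb_eq[OF c] grad3_def by (simp add: vec_eq_iff forall_3)
  then show ?thesis
    using assms by (simp add: c vec_eq_iff forall_3 matrix_vector_mult_def sum_3 Pb_def Fb_def)
qed

lemma Cb_eq:
  assumes "c = b1 / 2" "d = b2 / b3"
  shows "Cb b1 b2 b3 = (\<lambda>x. c * (x$2 * x$2 - d * (x$3 * x$3)))"
  using assms by (simp add: fun_eq_iff Cb_def power2_eq_square)

lemma smooth3_Cb: "smooth3 (Cb b1 b2 b3)"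
  unfolding Cb_eq[OF refl refl] by (intro smooth3_diff smooth3_mult smooth3_const smooth3_component)

lemma pbracket_Pb_Cb: "pbracket (Pb b1 b2 b3) (Cb b1 b2 b3) f x = 0"
proof -
  obtain a c d where a: "a = b1 * b2 / b3" and c: "c = b1 / 2" and d: "d = b2 / b3" by blast
  show ?thesis
    by (simp add: pbracket_Pb[OF a] Cb_eq[OF c d]) (simp add: a c d)
qed

theorem proposition3p3:
  fixes b1 b2 b3 :: real
  assumes "b1 * b2 * b3 \<noteq> 0"
  shows "hamilton_poisson_realization (Pb b1 b2 b3) (Hb b1 b2 b3) (Fb b1 b2 b3)
         \<and> casimir (Pb b1 b2 b3) (Cb b1 b2 b3)"
  using assms poisson_structure_Pb smooth3_Hb Fb_eq_Pb_grad3_Hb smooth3_Cb pbracket_Pb_Cb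
  unfolding hamilton_poisson_realization_def casimir_def by simp

end
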